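(* The linear map $C:\Lambda^\infty\mathbb V\to\Lambda^\infty\mathbb W$ defined by $C(|\lambda\rangle)=|\lambda'_*\rangle$ for every partition $\lambda$ (with conjugate partition $\lambda'$) is an isomorphism of $\mathcal U$-modules.
   Context: $\mathcal U=U_q(\mathfrak{sl}(\infty))$ is the $\mathbb Q(q)$-algebra generated by $E_a,F_a,K_{a,a+1}^{\pm1}$ ($a\in\mathbb Z$), the subalgebra generated by $E_a,F_a,K_{a,a+1}=K_aK_{a+1}^{-1}$ in the standard quantum group $U_q(\mathfrak{gl}(\infty))$ with generators $E_a,F_a,K_a^{\pm1}$. $\Lambda^\infty\mathbb V$ is the $\mathcal U$-module with basis $v_{a_1}\wedge v_{a_2}\wedge\cdots$ ($a_1>a_2>\cdots$ integers, $a_i=1-i$ for $i\gg0$) where, on a basis vector with index set $S=\{a_1,a_2,\dots\}$: $F_a$ replaces the index $a$ by $a+1$ if $a\in S$, $a+1\notin S$, and gives $0$ otherwise; $E_a$ replaces $a+1$ by $a$ if $a+1\in S$, $a\notin S$, and gives $0$ otherwise; $K_{a,a+1}$ acts by $q^{[a\in S]-[a+1\in S]}$. $\Lambda^\infty\mathbb W$ is the $\mathcal U$-module with basis $w_{b_1}\wedge w_{b_2}\wedge\cdots$ ($b_1<b_2<\cdots$, $b_i=i$ for $i\gg0$) where, for index set $S$: $F_a$ replaces $a+1$ by $a$ if $a+1\in S,a\notin S$ (else $0$); $E_a$ replaces $a$ by $a+1$ if $a\in S,a+1\notin S$ (else $0$); $K_{a,a+1}$ acts by $q^{[a+1\in S]-[a\in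 S]}$. (These are the semi-infinite $q$-wedge spaces of the natural module $\mathbb V$ and its dual $\mathbb W$.) For a partition $\lambda=(\lambda_1,\lambda_2,\dots)$ with conjugate $\lambda'$, $|\lambda\rangle=v_{\lambda_1}\wedge v_{\lambda_2-1}\wedge v_{\lambda_3-2}\wedge\cdots$ and $|\lambda'_*\rangle=w_{1-\lambda'_1}\wedge w_{2-\lambda'_2}\wedge w_{3-\lambda'_3}\wedge\cdots$. *)

theory Defs
  imports "HOL-Computational_Algebra.Polynomial" "HOL-Computational_Algebra.Fraction_Field"
begin

type_synonym Qq = "rat poly fract"

definition qq :: Qq where "qq = Fract [:0, 1:] 1"

text \<open>Basis vectors are indexed by their (infinite) index sets S of integers.\<close>

text \<open>Index sets v_{a_1} ^ v_{a_2} ^ ... with a_1 > a_2 > ..., a_i = 1 - i for i large.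
  0-based: a i stands for a_{i+1}, so a i = - i eventually.\<close>
definition VIdx :: "int set \<Rightarrow> bool" where
  "VIdx S \<longleftrightarrow> (\<exists>a :: nat \<Rightarrow> int. (\<forall>i. a (Suc i) < a i)
      \<and> (\<exists>N. \<forall>i\<ge>N. a i = - int i) \<and> S = range a)"

text \<open>Index sets w_{b_1} ^ w_{b_2} ^ ... with b_1 < b_2 < ..., b_i = i for i large.
  0-based: b i stands for b_{i+1}, so b i = i + 1 eventually.\<close>
definition WIdx :: "int set \<Rightarrow> bool" where
  "WIdx S \<longleftrightarrow> (\<exists>b :: nat \<Rightarrow> int. (\<forall>i. b i < b (Suc i))
      \<and> (\<exists>N. \<forall>i\<ge>N. b i = int i + 1) \<and> S = range b)"

definition LV :: "(int set \<Rightarrow> Qq) set" where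
  "LV = {x. finite {S. x S \<noteq> 0} \<and> (\<forall>S. x S \<noteq> 0 \<longrightarrow> VIdx S)}"

definition LW :: "(int set \<Rightarrow> Qq) set" where
  "LW = {x. finite {S. x S \<noteq> 0} \<and> (\<forall>S. x S \<noteq> 0 \<longrightarrow> WIdx S)}"

definition bvec :: "int set \<Rightarrow> int set \<Rightarrow> Qq" where
  "bvec S = (\<lambda>T. if T = S then 1 else 0)"

definition ind :: "bool \<Rightarrow> int" where "ind P = (if P then 1 else 0)"

definition FV :: "int \<Rightarrow> (int set \<Rightarrow> Qq) \<Rightarrow> (int set \<Rightarrow> Qq)" where
  "FV a x = (\<lambda>T. if a + 1 \<in> T \<and> a \<notin> T then x (insert a (T - {a + 1})) else 0)"
  \<comment> \<open>F_a replaces index a by a+1\<close>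
definition EV :: "int \<Rightarrow> (int set \<Rightarrow> Qq) \<Rightarrow> (int set \<Rightarrow> Qq)" where
  "EV a x = (\<lambda>T. if a \<in> T \<and> a + 1 \<notin> T then x (insert (a + 1) (T - {a})) else 0)"
  \<comment> \<open>E_a replaces index a+1 by a\<close>
definition KV :: "int \<Rightarrow> (int set \<Rightarrow> Qq) \<Rightarrow> (int set \<Rightarrow> Qq)" where
  "KV a x = (\<lambda>T. qq powi (ind (a \<in> T) - ind (a + 1 \<in> T)) * x T)"
definition KinvV :: "int \<Rightarrow> (int set \<Rightarrow> Qq) \<Rightarrow> (int set \<Rightarrow> Qq)" where
  "KinvV a x = (\<lambda>T. qq powi (- (ind (a \<in> T) - ind (a + 1 \<in> T))) * x T)"

definition FW :: "int \<Rightarrow> (int set \<Rightarrow> Qq) \<Rightarrow> (int set \<Rightarrow> Qq)" where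
  "FW a x = (\<lambda>T. if a \<in> T \<and> a + 1 \<notin> T then x (insert (a + 1) (T - {a})) else 0)"
  \<comment> \<open>F_a replaces index a+1 by a\<close>
definition EW :: "int \<Rightarrow> (int set \<Rightarrow> Qq) \<Rightarrow> (int set \<Rightarrow> Qq)" where
  "EW a x = (\<lambda>T. if a + 1 \<in> T \<and> a \<notin> T then x (insert a (T - {a + 1})) else 0)"
  \<comment> \<open>E_a replaces index a by a+1\<close>
definition KW :: "int \<Rightarrow> (int set \<Rightarrow> Qq) \<Rightarrow> (int set \<Rightarrow> Qq)" where
  "KW a x = (\<lambda>T. qq powi (ind (a + 1 \<in> T) - ind (a \<in> T)) * x T)"
definition KinvW :: "int \<Rightarrow> (int set \<Rightarrow> Qq) \<Rightarrow> (int set \<Rightarrow> Qq)" where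
  "KinvW a x = (\<lambda>T. qq powi (- (ind (a + 1 \<in> T) - ind (a \<in> T))) * x T)"

text \<open>Partitions as weakly decreasing, eventually zero sequences (0-based: lam i = lambda_{i+1}).\<close>
definition partition :: "(nat \<Rightarrow> nat) \<Rightarrow> bool" where
  "partition lam \<longleftrightarrow> (\<forall>i. lam (Suc i) \<le> lam i) \<and> (\<exists>N. \<forall>i\<ge>N. lam i = 0)"

text \<open>Conjugate partition, 0-based: conjp lam j = lambda'_{j+1} = #{i : lambda_i >= j+1}.\<close>
definition conjp :: "(nat \<Rightarrow> nat) \<Rightarrow> nat \<Rightarrow> nat" where
  "conjp lam j = card {i. j < lam i}"

text \<open>|lambda> = v_{lambda_1} ^ v_{lambda_2 - 1} ^ ...: index set {lambda_{i+1} - i}.\<close>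
definition ketV :: "(nat \<Rightarrow> nat) \<Rightarrow> int set" where
  "ketV lam = range (\<lambda>i. int (lam i) - int i)"

text \<open>|lambda'_*> = w_{1-lambda'_1} ^ w_{2-lambda'_2} ^ ...: index set {(j+1) - lambda'_{j+1}}.\<close>
definition ketW :: "(nat \<Rightarrow> nat) \<Rightarrow> int set" where
  "ketW lam = range (\<lambda>j. int j + 1 - int (conjp lam j))"

definition is_C :: "((int set \<Rightarrow> Qq) \<Rightarrow> (int set \<Rightarrow> Qq)) \<Rightarrow> bool" where
  "is_C C \<longleftrightarrow> C ` LV \<subseteq> LW
     \<and> (\<forall>x\<in>LV. \<forall>y\<in>LV. C (\<lambda>S. x S + y S) = (\<lambda>T. C x T + C y T))
     \<and> (\<forall>c. \<forall>x\<in>LV. C (\<lambda>S. c * x S) = (\<lambda>T. c * C x T))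
     \<and> (\<forall>lam. partition lam \<longrightarrow> C (bvec (ketV lam)) = bvec (ketW lam))"

text \<open>Isomorphism of U-modules: bijective and commuting with all generators
  E_a, F_a, K_{a,a+1}, K_{a,a+1}^{-1} (these generate U).\<close>
definition U_iso :: "((int set \<Rightarrow> Qq) \<Rightarrow> (int set \<Rightarrow> Qq)) \<Rightarrow> bool" where
  "U_iso C \<longleftrightarrow> bij_betw C LV LW
     \<and> (\<forall>a. \<forall>x\<in>LV. C (EV a x) = EW a (C x))
     \<and> (\<forall>a. \<forall>x\<in>LV. C (FV a x) = FW a (C x))
     \<and> (\<forall>a. \<forall>x\<in>LV. C (KV a x) = KW a (C x))
     \<and> (\<forall>a. \<forall>x\<in>LV. C (KinvV a x) = KinvW a (C x))"

end

(* The index set {j - lambda'_j} of |lambda'_*> is the complement in Z of the index set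
   {lambda_i - i + 1} of |lambda>: the two sets record the vertical and the horizontal steps
   of the boundary of the Young diagram of lambda.  Since every admissible index set of
   Lambda^infty V comes from a partition, linearity forces C to be x |-> (T |-> x (-T)).
   Complementation turns "replace a by a + 1" into "replace a + 1 by a" and
   [a in S] - [a + 1 in S] into [a + 1 in -S] - [a in -S], which is exactly how the
   generators act on the two spaces; and C is bijective because complementation is an
   involution exchanging the admissible index sets of the two spaces. *)

theory Submission
  imports Defs
begin

lemma partition_antimono: "partition lam \<Longrightarrow> antimono lam"
  unfolding partition_def antimono_iff_le_Suc by blast

lemma conjp_eqI: "(\<And>i. i < c \<longleftrightarrow> j < lam i) \<Longrightarrow> conjp lam j = c"
proof -
  assume "\<And>i. i < c \<longleftrightarrow> j < lam i"
  then have "{i. j < lam i} = {..<c}"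
    by auto
  then show ?thesis
    unfolding conjp_def by simp
qed

lemma conjp_less_iff:
  assumes "partition lam"
  shows "i < conjp lam j \<longleftrightarrow> j < lam i"
proof -
  obtain N where "lam N = 0"
    using assms unfolding partition_def by blast
  then obtain c where c: "lam c \<le> j" and below_c: "\<And>k. k < c \<Longrightarrow> j < lam k"
    using exists_least_iff[of "\<lambda>k. lam k \<le> j"] by (metis le0 not_le)
  have below_iff: "k < c \<longleftrightarrow> j < lam k" for k
  proof
    assume "j < lam k"
    show "k < c"
    proof (rule ccontr)
      assume "\<not> k < c"
      then have "lam k \<le> lam c"
        using partition_antimono[OF assms] by (simp add: antimonoD)
      then show False
        using c \<open>j < lam k\<close> by linarith
    qed
  qed (rule below_c)
  then have "conjp lam j = c"
    by (rule conjp_eqI)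
  then show ?thesis
    using below_iff by simp
qed

lemma partition_conjp:
  assumes p: "partition lam"
  shows "partition (conjp lam)"
  unfolding partition_def
proof (intro conjI allI exI[of _ "lam 0"] impI)
  fix j
  show "conjp lam (Suc j) \<le> conjp lam j"
  proof (rule ccontr)
    assume "\<not> conjp lam (Suc j) \<le> conjp lam j"
    then have "Suc j < lam (conjp lam j)"
      using conjp_less_iff[OF p, of "conjp lam j" "Suc j"] by simp
    then show False
      using conjp_less_iff[OF p, of "conjp lam j" j] by simp
  qed
next
  fix j
  assume "lam 0 \<le> j"
  then show "conjp lam j = 0"
    using conjp_less_iff[OF p, of 0 j] by simp
qed

lemma ketW_eq_compl_ketV:
  assumes p: "partition lam"
  shows "ketW lam = - ketV lam"
proof (intro set_eqI iffI)
  fix n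
  assume "n \<in> ketW lam"
  then obtain j where nj: "n = int j + 1 - int (conjp lam j)"
    unfolding ketW_def by auto
  have "n \<noteq> int (lam i) - int i" for i
    using conjp_less_iff[OF p, of i j] nj by linarith
  then show "n \<in> - ketV lam"
    unfolding ketV_def by auto
next
  fix n
  assume "n \<in> - ketV lam"
  then have not_hit: "n \<noteq> int (lam i) - int i" for i
    unfolding ketV_def by auto
  define m where "m = nat (int (lam 0) - n)"
  have "lam m \<le> lam 0"
    using partition_antimono[OF p] by (simp add: antimonoD)
  then have "int (lam m) - int m \<le> n"
    unfolding m_def by linarith
  then obtain c where c: "int (lam c) - int c \<le> n"
    and below_c: "\<And>k. k < c \<Longrightarrow> n < int (lam k) - int k"
    using exists_least_iff[of "\<lambda>k. int (lam k) - int k \<le> n"] by (metis not_le)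
  have c_lt: "int (lam c) - int c < n"
    using c not_hit[of c] by linarith
  define j where "j = nat (n + int c - 1)"
  have j: "int j = n + int c - 1"
    using c_lt unfolding j_def by linarith
  have "i < c \<longleftrightarrow> j < lam i" for i
  proof
    assume "i < c"
    then have "lam (c - 1) \<le> lam i" and "n < int (lam (c - 1)) - int (c - 1)"
      using partition_antimono[OF p] below_c[of "c - 1"] by (auto simp: antimonoD)
    then show "j < lam i"
      using \<open>i < c\<close> j by linarith
  next
    assume "j < lam i"
    show "i < c"
    proof (rule ccontr)
      assume "\<not> i < c"
      then have "lam i \<le> lam c"
        using partition_antimono[OF p] by (simp add: antimonoD)
      then show False
        using \<open>j < lam i\<close> c_lt j by linarith
    qed
  qed
  then have "conjp lam j = c"
    by (rule conjp_eqI)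
  then have "n = int j + 1 - int (conjp lam j)"
    using j by linarith
  then show "n \<in> ketW lam"
    unfolding ketW_def by auto
qed

lemma VIdx_iff_ketV: "VIdx S \<longleftrightarrow> (\<exists>lam. partition lam \<and> S = ketV lam)"
proof
  assume "VIdx S"
  then obtain a N where dec: "\<And>i. a (Suc i) < a i" and tail: "\<And>i. i \<ge> N \<Longrightarrow> a i = - int i"
    and S: "S = range a"
    unfolding VIdx_def by blast
  define h where "h i = a i + int i" for i
  have "antimono h"
    unfolding antimono_iff_le_Suc h_def using dec by (smt (verit) of_nat_Suc)
  have h_tail: "h i = 0" if "i \<ge> N" for i
    using tail[OF that] unfolding h_def by simp
  have h_nonneg: "h i \<ge> 0" for i
    using antimonoD[OF \<open>antimono h\<close>, of i "max i N"] h_tail[of "max i N"] by simp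
  have "partition (\<lambda>i. nat (h i))"
    unfolding partition_def using \<open>antimono h\<close> h_tail
    by (auto simp: antimono_iff_le_Suc nat_mono intro!: exI[of _ N])
  moreover have "S = ketV (\<lambda>i. nat (h i))"
    unfolding S ketV_def using h_nonneg by (simp add: h_def)
  ultimately show "\<exists>lam. partition lam \<and> S = ketV lam"
    by blast
next
  assume "\<exists>lam. partition lam \<and> S = ketV lam"
  then obtain lam N where dec: "\<And>i. lam (Suc i) \<le> lam i" and tail: "\<And>i. i \<ge> N \<Longrightarrow> lam i = 0"
    and S: "S = ketV lam"
    unfolding partition_def by blast
  show "VIdx S"
    unfolding VIdx_def S ketV_def
  proof (intro exI conjI allI impI)
    show "int (lam (Suc i)) - int (Suc i) < int (lam i) - int i" for i
      using dec[of i] by linarith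
    show "int (lam i) - int i = - int i" if "i \<ge> N" for i
      using tail[OF that] by simp
  qed (rule refl)
qed

lemma reflect_reflect: "(\<lambda>t::int. 1 - t) ` (\<lambda>t. 1 - t) ` X = X"
  by (simp add: image_image)

lemma reflect_Compl: "(\<lambda>t::int. 1 - t) ` (- X) = - ((\<lambda>t. 1 - t) ` X)"
  by (rule bij_image_Compl_eq) (rule involuntory_imp_bij, simp)

lemma WIdx_iff_VIdx_reflect: "WIdx T \<longleftrightarrow> VIdx ((\<lambda>t. 1 - t) ` T)"
proof
  assume "WIdx T"
  then obtain b N where "\<forall>i. b i < b (Suc i)" "\<forall>i\<ge>N. b i = int i + 1" "T = range b"
    unfolding WIdx_def by blast
  then show "VIdx ((\<lambda>t. 1 - t) ` T)"
    unfolding VIdx_def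
    by (intro exI[of _ "\<lambda>i. 1 - b i"] conjI exI[of _ N]) (simp_all add: image_image)
next
  assume "VIdx ((\<lambda>t. 1 - t) ` T)"
  then obtain a N where "\<forall>i. a (Suc i) < a i" "\<forall>i\<ge>N. a i = - int i"
    "(\<lambda>t. 1 - t) ` T = range a"
    unfolding VIdx_def by blast
  moreover from this(3) have "T = range (\<lambda>i. 1 - a i)"
    using reflect_reflect[of T] by (simp add: image_image)
  ultimately show "WIdx T"
    unfolding WIdx_def by (intro exI[of _ "\<lambda>i. 1 - a i"] conjI exI[of _ N]) simp_all
qed

lemma reflect_ketW: "(\<lambda>t. 1 - t) ` ketW lam = ketV (conjp lam)"
  unfolding ketW_def ketV_def by (simp add: image_image)

lemma WIdx_compl_iff_VIdx: "WIdx (- S) \<longleftrightarrow> VIdx S"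
proof
  assume "WIdx (- S)"
  then have "VIdx ((\<lambda>t. 1 - t) ` (- S))"
    by (simp only: WIdx_iff_VIdx_reflect)
  then obtain mu where mu: "partition mu" "(\<lambda>t. 1 - t) ` (- S) = ketV mu"
    unfolding VIdx_iff_ketV by blast
  have "S = - ((\<lambda>t. 1 - t) ` ketV mu)"
    using arg_cong[where f = "image (\<lambda>t::int. 1 - t)", OF mu(2)]
    unfolding reflect_reflect by (metis double_compl)
  also have "\<dots> = (\<lambda>t. 1 - t) ` ketW mu"
    unfolding ketW_eq_compl_ketV[OF mu(1)] reflect_Compl ..
  also have "\<dots> = ketV (conjp mu)"
    by (rule reflect_ketW)
  finally show "VIdx S"
    unfolding VIdx_iff_ketV using partition_conjp[OF mu(1)] by blast
next
  assume "VIdx S"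
  then obtain lam where lam: "partition lam" "S = ketV lam"
    unfolding VIdx_iff_ketV by blast
  then have "(\<lambda>t. 1 - t) ` (- S) = ketV (conjp lam)"
    using reflect_ketW[of lam] ketW_eq_compl_ketV[OF lam(1)] by simp
  then have "VIdx ((\<lambda>t. 1 - t) ` (- S))"
    unfolding VIdx_iff_ketV using partition_conjp[OF lam(1)] by blast
  then show "WIdx (- S)"
    by (simp only: WIdx_iff_VIdx_reflect)
qed

lemma VIdx_move_adjacent:
  assumes "VIdx S" "s \<in> S" "t \<notin> S" "\<bar>s - t\<bar> = 1"
  shows "VIdx (insert t (S - {s}))"
proof -
  obtain f N where dec: "\<And>i. f (Suc i) < f i" and tail: "\<And>i. i \<ge> N \<Longrightarrow> f i = - int i"
    and S: "S = range f"
    using assms(1) unfolding VIdx_def by blast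
  obtain i where i: "f i = s"
    using assms(2) S by blast
  have avoid_t: "f k \<noteq> t" for k
    using assms(3) S by blast
  define g where "g = f(i := t)"
  have "\<forall>k. g (Suc k) < g k"
  proof
    fix k
    \<comment> \<open>t is adjacent to s and not a value of f, so it fits into the same gap of f as s\<close>
    show "g (Suc k) < g k"
      using dec[of k] dec[of i] avoid_t[of k] avoid_t[of "Suc k"] i assms(4)
      unfolding g_def by (cases "k = i"; cases "Suc k = i") auto
  qed
  moreover have "\<forall>k \<ge> max N (Suc i). g k = - int k"
    using tail unfolding g_def by auto
  moreover have "inj f"
    using strict_mono_imp_inj_on[of "\<lambda>i. - f i" UNIV] dec
    by (simp add: strict_mono_Suc_iff inj_on_def)
  then have "range g = insert t (S - {s})"
    unfolding g_def S using i by (auto simp: inj_eq image_iff)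
  ultimately show ?thesis
    unfolding VIdx_def by blast
qed

lemma LV_support_subset: "y \<in> LV \<Longrightarrow> {T. x T \<noteq> 0} \<subseteq> {T. y T \<noteq> 0} \<Longrightarrow> x \<in> LV"
  unfolding LV_def by (blast intro: finite_subset)

lemma LV_scale: "x \<in> LV \<Longrightarrow> (\<lambda>T. c T * x T) \<in> LV"
  by (erule LV_support_subset) auto

lemma bvec_LV: "VIdx S \<Longrightarrow> bvec S \<in> LV"
  unfolding LV_def bvec_def by simp

lemma LV_pullback:
  assumes x: "x \<in> LV" and inj: "inj_on \<phi> {T. P T}"
    and VIdx_\<phi>: "\<And>T. P T \<Longrightarrow> VIdx (\<phi> T) \<Longrightarrow> VIdx T"
  shows "(\<lambda>T. if P T then x (\<phi> T) else 0) \<in> LV"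
proof -
  have "{T. (if P T then x (\<phi> T) else 0) \<noteq> 0} = \<phi> -` {S. x S \<noteq> 0} \<inter> {T. P T}"
    by auto
  moreover have "finite {S. x S \<noteq> 0}"
    using x unfolding LV_def by blast
  then have "finite (\<phi> -` {S. x S \<noteq> 0} \<inter> {T. P T})"
    using inj by (rule finite_vimage_IntI)
  moreover have "VIdx T" if "P T" "x (\<phi> T) \<noteq> 0" for T
    using that x VIdx_\<phi> unfolding LV_def by blast
  ultimately show ?thesis
    unfolding LV_def by auto
qed

lemma LV_induct [consumes 1, case_names zero add]:
  assumes "x \<in> LV"
    and zero: "P (\<lambda>_. 0)"
    and add: "\<And>y S c. y \<in> LV \<Longrightarrow> VIdx S \<Longrightarrow> P y \<Longrightarrow> P (\<lambda>T. y T + c * bvec S T)"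
  shows "P x"
proof -
  have "\<forall>x\<in>LV. {S. x S \<noteq> 0} = F \<longrightarrow> P x" if "finite F" for F
    using that
  proof (induction F rule: finite_induct)
    case empty
    then show ?case
      using zero by (simp add: fun_eq_iff)
  next
    case (insert S F)
    show ?case
    proof (intro ballI impI)
      fix x
      assume x: "x \<in> LV" "{S. x S \<noteq> 0} = insert S F"
      define y where "y = x(S := 0)"
      have "y \<in> LV"
        using x(1) by (rule LV_support_subset) (auto simp: y_def)
      moreover have "{T. y T \<noteq> 0} = F"
        using x(2) insert.hyps(2) unfolding y_def by auto
      ultimately have "P y"
        using insert.IH by blast
      moreover have "VIdx S"
        using x unfolding LV_def by auto
      ultimately have "P (\<lambda>T. y T + x S * bvec S T)"
        using add \<open>y \<in> LV\<close> by blast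
      moreover have "x = (\<lambda>T. y T + x S * bvec S T)"
        unfolding y_def bvec_def by auto
      ultimately show "P x"
        by simp
    qed
  qed
  then show ?thesis
    using assms(1) unfolding LV_def by blast
qed

lemma EV_LV: "x \<in> LV \<Longrightarrow> EV a x \<in> LV"
  unfolding EV_def
proof (rule LV_pullback)
  have "insert a (insert (a + 1) (T - {a}) - {a + 1}) = T" if "a \<in> T \<and> a + 1 \<notin> T" for T
    using that by auto
  then show "inj_on (\<lambda>T. insert (a + 1) (T - {a})) {T. a \<in> T \<and> a + 1 \<notin> T}"
    by (intro inj_on_inverseI[where g = "\<lambda>S. insert a (S - {a + 1})"]) simp
next
  fix T
  assume "a \<in> T \<and> a + 1 \<notin> T" "VIdx (insert (a + 1) (T - {a}))"
  then show "VIdx T"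
    using VIdx_move_adjacent[of "insert (a + 1) (T - {a})" "a + 1" a] by (simp add: insert_absorb)
qed

lemma FV_LV: "x \<in> LV \<Longrightarrow> FV a x \<in> LV"
  unfolding FV_def
proof (rule LV_pullback)
  have "insert (a + 1) (insert a (T - {a + 1}) - {a}) = T" if "a + 1 \<in> T \<and> a \<notin> T" for T
    using that by auto
  then show "inj_on (\<lambda>T. insert a (T - {a + 1})) {T. a + 1 \<in> T \<and> a \<notin> T}"
    by (intro inj_on_inverseI[where g = "\<lambda>S. insert (a + 1) (S - {a})"]) simp
next
  fix T
  assume "a + 1 \<in> T \<and> a \<notin> T" "VIdx (insert a (T - {a + 1}))"
  then show "VIdx T"
    using VIdx_move_adjacent[of "insert a (T - {a + 1})" a "a + 1"] by (simp add: insert_absorb)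
qed

lemma KV_LV: "x \<in> LV \<Longrightarrow> KV a x \<in> LV"
  unfolding KV_def by (rule LV_scale)

lemma KinvV_LV: "x \<in> LV \<Longrightarrow> KinvV a x \<in> LV"
  unfolding KinvV_def by (rule LV_scale)

definition coeff_compl :: "(int set \<Rightarrow> Qq) \<Rightarrow> int set \<Rightarrow> Qq" where
  "coeff_compl x = (\<lambda>T. x (- T))"

lemma coeff_compl_coeff_compl [simp]: "coeff_compl (coeff_compl x) = x"
  unfolding coeff_compl_def by simp

lemma coeff_compl_in_LW_iff: "coeff_compl x \<in> LW \<longleftrightarrow> x \<in> LV"
proof -
  have support: "{T. coeff_compl x T \<noteq> 0} = uminus -` {S. x S \<noteq> 0}"
    unfolding coeff_compl_def by auto
  have "finite {T. coeff_compl x T \<noteq> 0} \<longleftrightarrow> finite {S. x S \<noteq> 0}"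
    unfolding support by (rule finite_vimage_iff) (rule involuntory_imp_bij, simp)
  moreover have "(\<forall>T. x (- T) \<noteq> 0 \<longrightarrow> WIdx T) \<longleftrightarrow> (\<forall>S. x S \<noteq> 0 \<longrightarrow> VIdx S)"
    using WIdx_compl_iff_VIdx by (metis double_compl)
  ultimately show ?thesis
    unfolding LV_def LW_def coeff_compl_def by simp
qed

lemma bij_betw_coeff_compl: "bij_betw coeff_compl LV LW"
proof (rule bij_betw_byWitness[where f' = coeff_compl])
  show "coeff_compl ` LV \<subseteq> LW"
    using coeff_compl_in_LW_iff by blast
  show "coeff_compl ` LW \<subseteq> LV"
  proof
    fix x
    assume "x \<in> coeff_compl ` LW"
    then obtain w where "w \<in> LW" "x = coeff_compl w"
      by blast
    then show "x \<in> LV"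
      using coeff_compl_in_LW_iff[of x] by simp
  qed
qed simp_all

lemma coeff_compl_bvec: "coeff_compl (bvec S) = bvec (- S)"
  unfolding coeff_compl_def bvec_def by (auto simp: fun_eq_iff)

lemma is_C_coeff_compl: "is_C coeff_compl"
  unfolding is_C_def
proof (intro conjI allI ballI impI)
  show "coeff_compl ` LV \<subseteq> LW"
    using coeff_compl_in_LW_iff by blast
  show "coeff_compl (bvec (ketV lam)) = bvec (ketW lam)" if "partition lam" for lam
    using that by (simp add: coeff_compl_bvec ketW_eq_compl_ketV)
qed (simp_all add: coeff_compl_def)

lemma is_C_imp_eq_coeff_compl:
  assumes "is_C C" and "x \<in> LV"
  shows "C x = coeff_compl x"
proof -
  from \<open>is_C C\<close> have C_add: "\<And>x y. x \<in> LV \<Longrightarrow> y \<in> LV \<Longrightarrow> C (\<lambda>S. x S + y S) = (\<lambda>T. C x T + C y T)"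
    and C_scale: "\<And>c x. x \<in> LV \<Longrightarrow> C (\<lambda>S. c * x S) = (\<lambda>T. c * C x T)"
    and C_basis: "\<And>lam. partition lam \<Longrightarrow> C (bvec (ketV lam)) = bvec (ketW lam)"
    unfolding is_C_def by blast+
  show ?thesis
    using \<open>x \<in> LV\<close>
  proof (induction rule: LV_induct)
    case zero
    have "(\<lambda>_. 0) \<in> LV"
      unfolding LV_def by simp
    from C_scale[OF this, of 0] show ?case
      by (simp add: coeff_compl_def)
  next
    case (add y S c)
    obtain lam where lam: "partition lam" "S = ketV lam"
      using \<open>VIdx S\<close> VIdx_iff_ketV by blast
    have S_LV: "bvec S \<in> LV"
      using \<open>VIdx S\<close> by (rule bvec_LV)
    have "C (bvec S) = coeff_compl (bvec S)"
      using C_basis[OF lam(1)] ketW_eq_compl_ketV[OF lam(1)] lam(2) by (simp add: coeff_compl_bvec)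
    then have "C (\<lambda>T. y T + c * bvec S T) = (\<lambda>T. C y T + c * coeff_compl (bvec S) T)"
      using C_add[OF \<open>y \<in> LV\<close> LV_scale[OF S_LV]] C_scale[OF S_LV] by simp
    then show ?case
      using add.IH by (simp add: coeff_compl_def)
  qed
qed

lemma coeff_compl_EV: "coeff_compl (EV a x) = EW a (coeff_compl x)"
proof -
  have "- insert a (T - {a + 1}) = insert (a + 1) (- T - {a})" if "a + 1 \<in> T" for T
    using that by auto
  then show ?thesis
    unfolding coeff_compl_def EV_def EW_def by (auto simp: fun_eq_iff)
qed

lemma coeff_compl_FV: "coeff_compl (FV a x) = FW a (coeff_compl x)"
proof -
  have "- insert (a + 1) (T - {a}) = insert a (- T - {a + 1})" if "a \<in> T" for T
    using that by auto
  then show ?thesis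
    unfolding coeff_compl_def FV_def FW_def by (auto simp: fun_eq_iff)
qed

lemma coeff_compl_KV: "coeff_compl (KV a x) = KW a (coeff_compl x)"
  unfolding coeff_compl_def KV_def KW_def by (rule ext) (simp add: ind_def)

lemma coeff_compl_KinvV: "coeff_compl (KinvV a x) = KinvW a (coeff_compl x)"
  unfolding coeff_compl_def KinvV_def KinvW_def by (rule ext) (simp add: ind_def)

theorem theorem6p3:
  shows "(\<exists>C. is_C C) \<and> (\<forall>C. is_C C \<longrightarrow> U_iso C)"
proof (intro conjI allI impI)
  show "\<exists>C. is_C C"
    using is_C_coeff_compl by blast
next
  fix C
  assume "is_C C"
  then have C_eq: "\<And>x. x \<in> LV \<Longrightarrow> C x = coeff_compl x"
    by (rule is_C_imp_eq_coeff_compl)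
  have "bij_betw C LV LW"
    using bij_betw_coeff_compl bij_betw_cong[of LV C coeff_compl] C_eq by blast
  moreover have "C (EV a x) = EW a (C x)" "C (FV a x) = FW a (C x)"
    "C (KV a x) = KW a (C x)" "C (KinvV a x) = KinvW a (C x)" if "x \<in> LV" for a x
    using that C_eq EV_LV FV_LV KV_LV KinvV_LV
      coeff_compl_EV coeff_compl_FV coeff_compl_KV coeff_compl_KinvV by simp_all
  ultimately show "U_iso C"
    unfolding U_iso_def by blast
qed

end
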